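(* Let $(X,\pi)$ be a symmetric two-player game with relative payoff game $(X,\Delta)$. If $(X,\Delta)$ does not contain a strict improvement cycle, then it does not contain an imitation cycle.
   Context: $\pi(x,y)$ is the payoff of the player choosing $x$ against $y$; $\Delta(x,y)=\pi(x,y)-\pi(y,x)$. In the two-player game $(X,\Delta)$, at a profile $(x,y)\in X\times X$ player 1 gets $\Delta(x,y)$ and player 2 gets $\Delta(y,x)$. A sequential path is a sequence of profiles in which consecutive profiles differ in exactly one player's action; it is a strict improvement path if at each step the player who switches strictly increases her own payoff; a strict improvement cycle is a finite strict improvement path $(x_0,y_0),\dots,(x_m,y_m)$ with $(x_0,y_0)=(x_m,y_m)$. A cycle is a finite sequence of profiles $(x_0,y_0),\dots,(x_n,y_n)$, not all equal, with $(x_0,y_0)=(x_n,y_n)$; it is an imitation cycle if for all consecutive profiles $(x_t,y_t),(x_{t+1},y_{t+1})$ on it, $\Delta(x_t,y_t)>0$ and $y_{t+1}=x_t$. *)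

theory Defs
  imports Complex_Main
begin

definition Delta :: "('a \<Rightarrow> 'a \<Rightarrow> real) \<Rightarrow> 'a \<Rightarrow> 'a \<Rightarrow> real" where
  "Delta \<pi> x y = \<pi> x y - \<pi> y x"

text \<open>Two-player game (X,u): at profile (x,y) player 1 gets u x y, player 2 gets u y x.
  A path is a function p on indices 0..m with p t \<in> X \<times> X.\<close>

definition strict_improvement_step :: "('a \<Rightarrow> 'a \<Rightarrow> real) \<Rightarrow> 'a \<times> 'a \<Rightarrow> 'a \<times> 'a \<Rightarrow> bool" where
  "strict_improvement_step u a b \<longleftrightarrow>
     (fst b \<noteq> fst a \<and> snd b = snd a \<and> u (fst b) (snd a) > u (fst a) (snd a)) \<or>
     (fst b = fst a \<and> snd b \<noteq> snd a \<and> u (snd b) (fst a) > u (snd a) (fst a))"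

definition strict_improvement_cycle ::
  "'a set \<Rightarrow> ('a \<Rightarrow> 'a \<Rightarrow> real) \<Rightarrow> (nat \<Rightarrow> 'a \<times> 'a) \<Rightarrow> nat \<Rightarrow> bool" where
  "strict_improvement_cycle X u p m \<longleftrightarrow>
     0 < m \<and> (\<forall>t\<le>m. p t \<in> X \<times> X) \<and> p 0 = p m \<and>
     (\<forall>t<m. strict_improvement_step u (p t) (p (Suc t)))"

definition imitation_cycle ::
  "'a set \<Rightarrow> ('a \<Rightarrow> 'a \<Rightarrow> real) \<Rightarrow> (nat \<Rightarrow> 'a \<times> 'a) \<Rightarrow> nat \<Rightarrow> bool" where
  "imitation_cycle X u p n \<longleftrightarrow>
     (\<forall>t\<le>n. p t \<in> X \<times> X) \<and> p 0 = p n \<and> (\<exists>s\<le>n. \<exists>t\<le>n. p s \<noteq> p t) \<and>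
     (\<forall>t<n. u (fst (p t)) (snd (p t)) > 0 \<and> snd (p (Suc t)) = fst (p t))"

end

theory Submission
  imports Defs
begin

text \<open>The relative payoff game is symmetric zero-sum. Along an imitation cycle
  (x_t, y_t) \<rightarrow> (x_{t+1}, x_t), insert the intermediate profile (x_t, x_t): first player 2
  copies x_t, raising her payoff from -\<Delta>(x_t, y_t) < 0 to 0; then player 1 switches
  to x_{t+1}, raising his payoff from 0 to \<Delta>(x_{t+1}, y_{t+1}) > 0. This doubles the
  imitation cycle into a strict improvement cycle.\<close>

lemma Delta_skew: "Delta \<pi> y x = - Delta \<pi> x y"
  by (simp add: Delta_def)

lemma strict_improvement_step_copy_opponent:
  fixes u :: "'a \<Rightarrow> 'a \<Rightarrow> real"
  assumes skew: "\<And>x y. u y x = - u x y" and "u x y > 0"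
  shows "strict_improvement_step u (x, y) (x, x)"
proof -
  have "u x x = 0" using skew[of x x] by simp
  moreover have "u y x < 0" using skew[of x y] \<open>u x y > 0\<close> by simp
  ultimately show ?thesis
    unfolding strict_improvement_step_def by auto
qed

lemma strict_improvement_step_leave_diagonal:
  fixes u :: "'a \<Rightarrow> 'a \<Rightarrow> real"
  assumes skew: "\<And>x y. u y x = - u x y" and "u x' x > 0"
  shows "strict_improvement_step u (x, x) (x', x)"
proof -
  have "u x x = 0" using skew[of x x] by simp
  with \<open>u x' x > 0\<close> show ?thesis
    unfolding strict_improvement_step_def by auto
qed

lemma imitation_cycle_length_pos:
  assumes "imitation_cycle X u p n"
  shows "0 < n"
  using assms unfolding imitation_cycle_def by (metis le_zero_eq neq0_conv)

lemma imitation_cycle_advantage_pos: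
  assumes cyc: "imitation_cycle X u p n" and "t \<le> n"
  shows "u (fst (p t)) (snd (p t)) > 0"
proof (cases "t < n")
  case True
  with cyc show ?thesis unfolding imitation_cycle_def by blast
next
  case False
  with \<open>t \<le> n\<close> have "p t = p 0" using cyc unfolding imitation_cycle_def by simp
  moreover have "0 < n" using cyc by (rule imitation_cycle_length_pos)
  ultimately show ?thesis using cyc unfolding imitation_cycle_def by metis
qed

definition interpolate_diagonal :: "(nat \<Rightarrow> 'a \<times> 'a) \<Rightarrow> nat \<Rightarrow> 'a \<times> 'a" where
  "interpolate_diagonal p k =
     (if even k then p (k div 2) else (fst (p (k div 2)), fst (p (k div 2))))"

lemma strict_improvement_cycle_interpolate_diagonal:
  fixes u :: "'a \<Rightarrow> 'a \<Rightarrow> real"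
  assumes skew: "\<And>x y. u y x = - u x y" and cyc: "imitation_cycle X u p n"
  shows "strict_improvement_cycle X u (interpolate_diagonal p) (2 * n)"
  unfolding strict_improvement_cycle_def
proof (intro conjI allI impI)
  let ?q = "interpolate_diagonal p"
  have mem: "\<And>t. t \<le> n \<Longrightarrow> p t \<in> X \<times> X"
    and imitates: "\<And>t. t < n \<Longrightarrow> snd (p (Suc t)) = fst (p t)"
    using cyc unfolding imitation_cycle_def by auto
  show "0 < 2 * n" using imitation_cycle_length_pos[OF cyc] by simp
  show "?q 0 = ?q (2 * n)"
    using cyc by (simp add: interpolate_diagonal_def imitation_cycle_def)
  fix k
  show "k \<le> 2 * n \<Longrightarrow> ?q k \<in> X \<times> X"
    using mem[of "k div 2"] by (auto simp: interpolate_diagonal_def mem_Times_iff)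
  assume k: "k < 2 * n"
  show "strict_improvement_step u (?q k) (?q (Suc k))"
  proof (cases "even k")
    case True
    then obtain t where kt: "k = 2 * t" by blast
    obtain x y where profile: "p t = (x, y)" by fastforce
    have "u x y > 0"
      using imitation_cycle_advantage_pos[OF cyc, of t] k kt profile by simp
    then show ?thesis
      using strict_improvement_step_copy_opponent[of u, OF skew] kt profile
      by (simp add: interpolate_diagonal_def)
  next
    case False
    then obtain t where kt: "k = 2 * t + 1" by (metis oddE)
    with k have "t < n" by simp
    then obtain x' where next_profile: "p (Suc t) = (x', fst (p t))"
      using imitates[of t] by (metis prod.collapse)
    have "u x' (fst (p t)) > 0"
      using imitation_cycle_advantage_pos[OF cyc, of "Suc t"] \<open>t < n\<close> next_profile by simp
    then show ?thesis
      using strict_improvement_step_leave_diagonal[of u, OF skew] kt next_profile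
      by (simp add: interpolate_diagonal_def)
  qed
qed

theorem lemma4:
  fixes X :: "'a set" and \<pi> :: "'a \<Rightarrow> 'a \<Rightarrow> real"
  assumes "\<not> (\<exists>p m. strict_improvement_cycle X (Delta \<pi>) p m)"
  shows "\<not> (\<exists>p n. imitation_cycle X (Delta \<pi>) p n)"
  using assms strict_improvement_cycle_interpolate_diagonal[of "Delta \<pi>", OF Delta_skew] by blast

end
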